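(* Let $c$ (with $X,Y$) satisfy the standing assumptions below, and suppose $c$ satisfies Loeper's condition. If there exist $r>0$ and $M\ge1$ such that $$F(v_t)-F(v_0)\le Mt\,(F(v_1)-F(v_0))_+\quad\text{for all }t\in[0,1]$$ holds for all $x_0,x_1\in X$, all $v_0\in Y^*_{x_0}$ and all $v_1\in B^+_r(v_0)\cap Y^*_{x_0}$, then $c$ is QQconv.
   Context: Standing assumptions: $X,Y\subset\mathbb{R}^n$ compact; $c:X\times Y\to\mathbb{R}$ measurable, differentiable, with mixed Hessians $D^2_{xy}c$, $D^2_{yx}c$ existing and $(D^2_{xy}c)^T=D^2_{yx}c$; $-D_xc(x,\cdot)$ injective on $Y$ for each $x$ and $-D_yc(\cdot,y)$ injective on $X$ for each $y$; $D^2_{xy}c(x,y)$ invertible everywhere; $D^2_{xy}c$ Lipschitz; $Y^*_x:=-D_xc(x,Y)$ convex for each $x\in X$ and $X^*_y:=-D_yc(X,y)$ convex for each $y\in Y$. The map $\exp^c_x:Y^*_x\to Y$ is the inverse of $-D_xc(x,\cdot)$. For $x_0,x_1\in X$, define $F:Y^*_{x_0}\to\mathbb{R}$ by $F(v)=-c(x_1,\exp^c_{x_0}(v))+c(x_0,\exp^c_{x_0}(v))$ (it depends on $x_0,x_1$), and $v_t=(1-t)v_0+tv_1$. $B^+_r(v_0)=\{v\in B_r(v_0):\langle v-v_0,\nabla F(v_0)\rangle\ge0\}$, where $B_r(v_0)$ is the open Euclidean ball. Loeper's condition: $F(v_t)\le\max\{F(v_0),F(v_1)\}$ for all $x_0,x_1\in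 X$, $v_0,v_1\in Y^*_{x_0}$, $t\in[0,1]$. QQconv: there is $M'\ge1$ with $F(v_t)-F(v_0)\le M't\,(F(v_1)-F(v_0))_+$ for all $x_0,x_1\in X$, $v_0,v_1\in Y^*_{x_0}$, $t\in[0,1]$; here $a_+=\max\{a,0\}$. *)

theory Defs
  imports "HOL-Analysis.Analysis"
begin

type_synonym 'n vec = "real ^ 'n"

definition standing_assumptions ::
  "'n::finite vec set \<Rightarrow> 'n vec set \<Rightarrow> ('n vec \<Rightarrow> 'n vec \<Rightarrow> real)
   \<Rightarrow> ('n vec \<Rightarrow> 'n vec \<Rightarrow> 'n vec) \<Rightarrow> ('n vec \<Rightarrow> 'n vec \<Rightarrow> 'n vec)
   \<Rightarrow> ('n vec \<Rightarrow> 'n vec \<Rightarrow> real^'n^'n) \<Rightarrow> ('n vec \<Rightarrow> 'n vec \<Rightarrow> real^'n^'n) \<Rightarrow> bool"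
  where "standing_assumptions X Y c Dx Dy Dxy Dyx \<longleftrightarrow>
    compact X \<and> compact Y \<and>
    (\<lambda>(x, y). c x y) \<in> borel_measurable (restrict_space borel (X \<times> Y)) \<and>
    (\<forall>x\<in>X. \<forall>y\<in>Y. (\<lambda>(x', y'). c x' y') differentiable (at (x, y))) \<and>
    (\<forall>x\<in>X. \<forall>y\<in>Y. ((\<lambda>x'. c x' y) has_derivative (\<lambda>h. Dx x y \<bullet> h)) (at x)) \<and>
    (\<forall>x\<in>X. \<forall>y\<in>Y. ((\<lambda>y'. c x y') has_derivative (\<lambda>k. Dy x y \<bullet> k)) (at y)) \<and>
    (\<forall>x\<in>X. \<forall>y\<in>Y. ((\<lambda>y'. Dx x y') has_derivative (\<lambda>k. Dxy x y *v k)) (at y)) \<and>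
    (\<forall>x\<in>X. \<forall>y\<in>Y. ((\<lambda>x'. Dy x' y) has_derivative (\<lambda>h. Dyx x y *v h)) (at x)) \<and>
    (\<forall>x\<in>X. \<forall>y\<in>Y. transpose (Dxy x y) = Dyx x y) \<and>
    (\<forall>x\<in>X. inj_on (\<lambda>y. - Dx x y) Y) \<and>
    (\<forall>y\<in>Y. inj_on (\<lambda>x. - Dy x y) X) \<and>
    (\<forall>x\<in>X. \<forall>y\<in>Y. invertible (Dxy x y)) \<and>
    (\<exists>L. L-lipschitz_on (X \<times> Y) (\<lambda>(x, y). Dxy x y)) \<and>
    (\<forall>x\<in>X. convex ((\<lambda>y. - Dx x y) ` Y)) \<and>
    (\<forall>y\<in>Y. convex ((\<lambda>x. - Dy x y) ` X))"

definition Ystar :: "'n::finite vec set \<Rightarrow> ('n vec \<Rightarrow> 'n vec \<Rightarrow> 'n vec) \<Rightarrow> 'n vec \<Rightarrow> 'n vec set"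
  where "Ystar Y Dx x = (\<lambda>y. - Dx x y) ` Y"

definition expc :: "'n::finite vec set \<Rightarrow> ('n vec \<Rightarrow> 'n vec \<Rightarrow> 'n vec) \<Rightarrow> 'n vec \<Rightarrow> 'n vec \<Rightarrow> 'n vec"
  where "expc Y Dx x v = inv_into Y (\<lambda>y. - Dx x y) v"

definition Ffun :: "'n::finite vec set \<Rightarrow> ('n vec \<Rightarrow> 'n vec \<Rightarrow> real) \<Rightarrow> ('n vec \<Rightarrow> 'n vec \<Rightarrow> 'n vec)
    \<Rightarrow> 'n vec \<Rightarrow> 'n vec \<Rightarrow> 'n vec \<Rightarrow> real"
  where "Ffun Y c Dx x0 x1 v = - c x1 (expc Y Dx x0 v) + c x0 (expc Y Dx x0 v)"

definition gradF :: "'n::finite vec set \<Rightarrow> ('n vec \<Rightarrow> 'n vec \<Rightarrow> real) \<Rightarrow> ('n vec \<Rightarrow> 'n vec \<Rightarrow> 'n vec)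
    \<Rightarrow> 'n vec \<Rightarrow> 'n vec \<Rightarrow> 'n vec \<Rightarrow> 'n vec"
  where "gradF Y c Dx x0 x1 v =
    (SOME g. (Ffun Y c Dx x0 x1 has_derivative (\<lambda>h. g \<bullet> h)) (at v within Ystar Y Dx x0))"

definition Bplus :: "'n::finite vec set \<Rightarrow> ('n vec \<Rightarrow> 'n vec \<Rightarrow> real) \<Rightarrow> ('n vec \<Rightarrow> 'n vec \<Rightarrow> 'n vec)
    \<Rightarrow> 'n vec \<Rightarrow> 'n vec \<Rightarrow> real \<Rightarrow> 'n vec \<Rightarrow> 'n vec set"
  where "Bplus Y c Dx x0 x1 r v0 =
    {v \<in> ball v0 r. (v - v0) \<bullet> gradF Y c Dx x0 x1 v0 \<ge> 0}"

definition loeper :: "'n::finite vec set \<Rightarrow> 'n vec set \<Rightarrow> ('n vec \<Rightarrow> 'n vec \<Rightarrow> real)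
    \<Rightarrow> ('n vec \<Rightarrow> 'n vec \<Rightarrow> 'n vec) \<Rightarrow> bool"
  where "loeper X Y c Dx \<longleftrightarrow>
    (\<forall>x0\<in>X. \<forall>x1\<in>X. \<forall>v0\<in>Ystar Y Dx x0. \<forall>v1\<in>Ystar Y Dx x0. \<forall>t\<in>{0..1::real}.
       Ffun Y c Dx x0 x1 ((1 - t) *\<^sub>R v0 + t *\<^sub>R v1)
         \<le> max (Ffun Y c Dx x0 x1 v0) (Ffun Y c Dx x0 x1 v1))"

definition QQconv :: "'n::finite vec set \<Rightarrow> 'n vec set \<Rightarrow> ('n vec \<Rightarrow> 'n vec \<Rightarrow> real)
    \<Rightarrow> ('n vec \<Rightarrow> 'n vec \<Rightarrow> 'n vec) \<Rightarrow> bool"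
  where "QQconv X Y c Dx \<longleftrightarrow>
    (\<exists>M'\<ge>1. \<forall>x0\<in>X. \<forall>x1\<in>X. \<forall>v0\<in>Ystar Y Dx x0. \<forall>v1\<in>Ystar Y Dx x0. \<forall>t\<in>{0..1::real}.
       Ffun Y c Dx x0 x1 ((1 - t) *\<^sub>R v0 + t *\<^sub>R v1) - Ffun Y c Dx x0 x1 v0
         \<le> M' * t * max (Ffun Y c Dx x0 x1 v1 - Ffun Y c Dx x0 x1 v0) 0)"

end

theory Submission
  imports Defs
begin

text \<open>Along a segment, G(s) = F(v_s) is continuous and, by Loeper's condition, quasiconvex.
  If G(1) > G(0), let a be the last parameter with G(a) = G(0); G increases strictly
  after a, so v_1 - v_0 has nonnegative inner product with \<nabla>F(v_a) and the points of
  the segment within distance r of v_a lie in B^+_r(v_a). The hypothesis applied at v_a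
  over one step of parameter length \<delta>, combined with quasiconvexity, yields the
  estimate with M' = M (1 + 1/\<delta>). The step \<delta> only depends on r and a bound D on the
  diameters of the sets Y*_x, which is uniform in x: the maps
  D_x c(x, exp^c_{x_0}(.)) are Lipschitz on the convex set Y*_{x_0} with a constant
  controlled by compactness and invertibility of the mixed Hessian.\<close>

lemma gradient_inner_nonneg_if_increasing_along_ray:
  fixes F :: "'a::real_inner \<Rightarrow> real"
  assumes deriv: "(F has_derivative (\<lambda>h. g \<bullet> h)) (at p within S)"
    and ray: "\<And>s. 0 \<le> s \<Longrightarrow> s \<le> 1 \<Longrightarrow> p + s *\<^sub>R u \<in> S"
    and increasing: "\<And>s. 0 < s \<Longrightarrow> s \<le> 1 \<Longrightarrow> F p \<le> F (p + s *\<^sub>R u)"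
  shows "0 \<le> u \<bullet> g"
proof -
  have ray_deriv: "((\<lambda>s. p + s *\<^sub>R u) has_derivative (\<lambda>s. s *\<^sub>R u)) (at 0 within {0..1})"
    by (auto intro!: derivative_eq_intros)
  have "(F has_derivative (\<lambda>h. g \<bullet> h)) (at ((\<lambda>s. p + s *\<^sub>R u) 0) within (\<lambda>s. p + s *\<^sub>R u) ` {0..1})"
    using has_derivative_subset[OF deriv, of "(\<lambda>s. p + s *\<^sub>R u) ` {0..1}"] ray
    by (auto simp: image_subset_iff)
  from diff_chain_within[OF ray_deriv this]
  have "((\<lambda>s. F (p + s *\<^sub>R u)) has_derivative (\<lambda>s. g \<bullet> (s *\<^sub>R u))) (at 0 within {0..1})"
    by (simp only: o_def)
  then have "((\<lambda>s. F (p + s *\<^sub>R u)) has_field_derivative u \<bullet> g) (at 0 within {0..1})"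
    unfolding has_field_derivative_def by (rule has_derivative_eq_rhs) (auto simp: inner_commute)
  then have "((\<lambda>s. (F (p + s *\<^sub>R u) - F p) / s) \<longlongrightarrow> u \<bullet> g) (at 0 within {0..1})"
    by (simp add: has_field_derivative_iff)
  moreover have "\<forall>\<^sub>F s in at 0 within {0..1}. 0 \<le> (F (p + s *\<^sub>R u) - F p) / s"
    unfolding eventually_at_filter using increasing by (auto intro!: always_eventually)
  moreover have "at (0::real) within {0..1} \<noteq> bot"
    using trivial_limit_within[of 0 "{0..1::real}"] by (simp add: islimpt_Icc)
  ultimately show ?thesis
    by (rule tendsto_lowerbound)
qed

lemma invertible_matrices_uniform_bounds:
  fixes A :: "'a::topological_space \<Rightarrow> real^'n::finite^'n"
  assumes "compact K" and "continuous_on K A" and "\<And>p. p \<in> K \<Longrightarrow> invertible (A p)"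
  obtains m B where "m > 0" and "B \<ge> 0"
    and "\<And>p u. p \<in> K \<Longrightarrow> m * norm u \<le> norm (A p *v u)"
    and "\<And>p u. p \<in> K \<Longrightarrow> norm (A p *v u) \<le> B * norm u"
proof (cases "K = {}")
  case True
  then show ?thesis
    using that[of 1 0] by auto
next
  case False
  define f where "f = (\<lambda>(p, u). norm (A p *v u))"
  define KS where "KS = K \<times> sphere (0::real^'n) 1"
  have "compact KS" "KS \<noteq> {}"
    using assms(1) False by (auto simp: KS_def intro: compact_Times)
  moreover have "continuous_on KS f"
  proof -
    have "continuous_on KS (\<lambda>pu. A (fst pu))"
      by (rule continuous_on_compose2[OF assms(2)]) (auto simp: KS_def intro: continuous_intros)
    then show ?thesis
      unfolding f_def case_prod_beta matrix_vector_mult_def by (intro continuous_intros)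
  qed
  ultimately obtain q0 q1 where q: "q0 \<in> KS" "q1 \<in> KS"
    and min: "\<And>q. q \<in> KS \<Longrightarrow> f q0 \<le> f q" and max: "\<And>q. q \<in> KS \<Longrightarrow> f q \<le> f q1"
    using continuous_attains_inf continuous_attains_sup by metis
  have "f q0 > 0"
  proof -
    have "inj ((*v) (A (fst q0)))" "snd q0 \<noteq> 0"
      using q(1) assms(3) inj_matrix_vector_mult by (force simp: KS_def)+
    then show ?thesis
      by (metis f_def case_prod_beta injD matrix_vector_mult_0_right zero_less_norm_iff)
  qed
  moreover have "f q0 * norm u \<le> norm (A p *v u)" "norm (A p *v u) \<le> f q1 * norm u"
    if "p \<in> K" for p u
  proof -
    have "f q0 * norm u \<le> norm (A p *v u) \<and> norm (A p *v u) \<le> f q1 * norm u"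
    proof (cases "u = 0")
      case False
      then have "(p, u /\<^sub>R norm u) \<in> KS"
        using that by (simp add: KS_def)
      moreover have "f (p, u /\<^sub>R norm u) = norm (A p *v u) / norm u"
        by (simp add: f_def matrix_vector_mult_scaleR divide_inverse_commute)
      ultimately have "f q0 \<le> norm (A p *v u) / norm u \<and> norm (A p *v u) / norm u \<le> f q1"
        using min max by metis
      with False show ?thesis
        by (simp add: field_simps)
    qed simp
    then show "f q0 * norm u \<le> norm (A p *v u)" "norm (A p *v u) \<le> f q1 * norm u"
      by auto
  qed
  moreover have "f q1 \<ge> 0"
    by (simp add: f_def case_prod_beta)
  ultimately show ?thesis
    using that by blast
qed

lemma norm_matrix_vector_mult_right_inverse_le:
  fixes A A' C :: "real^'n::finite^'n"
  assumes "m > 0" and "B \<ge> 0" and "\<And>u. m * norm u \<le> norm (A *v u)" and "A ** A' = mat 1"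
    and "\<And>u. norm (C *v u) \<le> B * norm u"
  shows "norm (C *v (A' *v h)) \<le> B / m * norm h"
proof -
  have "norm (A' *v h) \<le> norm h / m"
    using assms(1,3,4) assms(3)[of "A' *v h"] by (simp add: matrix_vector_mul_assoc field_simps)
  then have "B * norm (A' *v h) \<le> B * (norm h / m)"
    using assms(2) by (rule mult_left_mono)
  with assms(5)[of "A' *v h"] show ?thesis
    by simp
qed

lemma affine_combination_of_segment_points:
  fixes v0 v1 :: "'a::real_vector"
  shows "(1 - \<tau>) *\<^sub>R ((1 - a) *\<^sub>R v0 + a *\<^sub>R v1) + \<tau> *\<^sub>R ((1 - b) *\<^sub>R v0 + b *\<^sub>R v1)
    = (1 - (a + \<tau> * (b - a))) *\<^sub>R v0 + (a + \<tau> * (b - a)) *\<^sub>R v1"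
  by (simp add: algebra_simps)

lemma last_point_at_initial_level:
  fixes G :: "real \<Rightarrow> real"
  assumes cont: "continuous_on {0..1} G" and "G 0 < G 1"
  obtains a where "0 \<le> a" "a < 1" "G a = G 0" "\<And>s. a < s \<Longrightarrow> s \<le> 1 \<Longrightarrow> G a < G s"
proof -
  define S where "S = {s \<in> {0..1}. G s = G 0}"
  have "closed S"
    unfolding S_def by (rule continuous_closed_preimage_constant[OF cont]) auto
  moreover have "0 \<in> S" and bdd: "bdd_above S"
    by (auto simp: S_def intro: bdd_aboveI[of _ 1])
  ultimately have "Sup S \<in> S"
    using closed_contains_Sup by blast
  then have a: "0 \<le> Sup S" "Sup S < 1" "G (Sup S) = G 0"
    using \<open>G 0 < G 1\<close> by (auto simp: S_def less_le)
  have "G (Sup S) < G s" if s: "Sup S < s" "s \<le> 1" for s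
  proof (rule ccontr)
    assume "\<not> G (Sup S) < G s"
    moreover have "continuous_on {s..1} G"
      using cont by (rule continuous_on_subset) (use a s in auto)
    ultimately obtain z where "s \<le> z" "z \<le> 1" "G z = G 0"
      using IVT'[of G s "G 0" 1] a \<open>G 0 < G 1\<close> s by auto
    then have "z \<in> S"
      using a s by (auto simp: S_def)
    with \<open>Sup S < s\<close> \<open>s \<le> z\<close> show False
      using cSup_upper[OF _ bdd] by fastforce
  qed
  with a that show ?thesis
    by blast
qed

lemma local_step_ratio_le:
  fixes a t \<delta> :: real
  assumes "0 \<le> a" "a < t" "t \<le> 1" "\<delta> > 0"
  shows "(t - a) / (min 1 (a + \<delta>) - a) \<le> (1 + 1 / \<delta>) * t"
proof -
  have "t - a \<le> (1 + 1 / \<delta>) * t * (min 1 (a + \<delta>) - a)"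
  proof (cases "1 \<le> a + \<delta>")
    case True
    have "t - a \<le> t * (1 - a)"
      using assms mult_left_le_one_le[of a t] by (simp add: algebra_simps)
    also have "\<dots> \<le> (1 + 1 / \<delta>) * t * (1 - a)"
      using assms by (intro mult_right_mono) (auto simp: distrib_right)
    finally show ?thesis
      using True by simp
  next
    case False
    then show ?thesis
      using assms by (simp add: algebra_simps)
  qed
  moreover have "min 1 (a + \<delta>) - a > 0"
    using assms by simp
  ultimately show ?thesis
    by (simp add: divide_le_eq)
qed

lemma growth_from_local_growth_if_increasing:
  fixes G :: "real \<Rightarrow> real"
  assumes cont: "continuous_on {0..1} G"
    and quasiconvex: "\<And>a s b. 0 \<le> a \<Longrightarrow> a \<le> s \<Longrightarrow> s \<le> b \<Longrightarrow> b \<le> 1 \<Longrightarrow> G s \<le> max (G a) (G b)"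
    and local_growth: "\<And>a b \<tau>. 0 \<le> a \<Longrightarrow> a \<le> b \<Longrightarrow> b \<le> 1 \<Longrightarrow> b - a \<le> \<delta>
       \<Longrightarrow> (\<And>s. a < s \<Longrightarrow> s \<le> 1 \<Longrightarrow> G a < G s) \<Longrightarrow> 0 \<le> \<tau> \<Longrightarrow> \<tau> \<le> 1
       \<Longrightarrow> G (a + \<tau> * (b - a)) - G a \<le> M * \<tau> * max (G b - G a) 0"
    and "\<delta> > 0" "M \<ge> 1" "0 \<le> t" "t \<le> 1" and increasing: "G 0 < G 1"
  shows "G t - G 0 \<le> M * (1 + 1 / \<delta>) * t * (G 1 - G 0)"
proof -
  obtain a where a: "0 \<le> a" "a < 1" "G a = G 0" and above: "\<And>s. a < s \<Longrightarrow> s \<le> 1 \<Longrightarrow> G a < G s"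
    using last_point_at_initial_level[OF cont increasing] by blast
  define b where "b = min 1 (a + \<delta>)"
  have b: "a < b" "b \<le> 1" "b - a \<le> \<delta>"
    using a \<open>\<delta> > 0\<close> by (auto simp: b_def)
  have "G t \<le> G 1" "G b \<le> G 1"
    using quasiconvex[of 0 t 1] quasiconvex[of 0 b 1] increasing assms(6,7) a b by linarith+
  consider "t \<le> a" | "a < t" "t \<le> b" | "b < t"
    by linarith
  then show ?thesis
  proof cases
    case 1
    have "0 \<le> M * (1 + 1 / \<delta>) * t * (G 1 - G 0)"
      using assms(4-6) increasing by (intro mult_nonneg_nonneg) auto
    moreover have "G t \<le> G 0"
      using quasiconvex[of 0 t a] 1 a assms(6) by simp
    ultimately show ?thesis
      by linarith
  next
    case 2
    define \<tau> where "\<tau> = (t - a) / (b - a)"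
    have \<tau>: "0 \<le> \<tau>" "\<tau> \<le> 1" "a + \<tau> * (b - a) = t"
      using 2 b by (auto simp: \<tau>_def)
    have "\<tau> \<le> (1 + 1 / \<delta>) * t"
      using local_step_ratio_le[of a t \<delta>] 2 a(1) assms(4,7) unfolding \<tau>_def b_def by blast
    have "max (G b - G a) 0 \<le> G 1 - G 0"
      using \<open>G b \<le> G 1\<close> a(3) increasing by simp
    have "G t - G 0 \<le> M * \<tau> * max (G b - G a) 0"
      using local_growth[OF a(1) less_imp_le[OF b(1)] b(2,3) above \<tau>(1,2)] \<tau>(3) a(3) by simp
    also have "\<dots> \<le> M * ((1 + 1 / \<delta>) * t) * (G 1 - G 0)"
      using \<open>\<tau> \<le> (1 + 1 / \<delta>) * t\<close> \<open>max (G b - G a) 0 \<le> G 1 - G 0\<close> \<tau>(1) assms(5)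
      by (intro mult_mono mult_left_mono) auto
    finally show ?thesis
      by (simp add: mult.assoc)
  next
    case 3
    then have "\<delta> \<le> t"
      using a assms(7) by (auto simp: b_def min_def split: if_splits)
    then have "1 \<le> t / \<delta>"
      using assms(4) by simp
    also have "\<dots> \<le> (1 + 1 / \<delta>) * t"
      using assms(6) by (simp add: algebra_simps)
    also have "\<dots> \<le> M * (1 + 1 / \<delta>) * t"
      using mult_right_mono[OF assms(5), of "(1 + 1 / \<delta>) * t"] assms(4,6) by (simp add: mult.assoc)
    finally have "1 * (G 1 - G 0) \<le> M * (1 + 1 / \<delta>) * t * (G 1 - G 0)"
      by (rule mult_right_mono) (use increasing in simp)
    then show ?thesis
      using \<open>G t \<le> G 1\<close> unfolding mult.left_neutral by linarith
  qed
qed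

lemma quasiconvex_growth_from_local_growth:
  fixes G :: "real \<Rightarrow> real"
  assumes cont: "continuous_on {0..1} G"
    and quasiconvex: "\<And>a s b. 0 \<le> a \<Longrightarrow> a \<le> s \<Longrightarrow> s \<le> b \<Longrightarrow> b \<le> 1 \<Longrightarrow> G s \<le> max (G a) (G b)"
    and local_growth: "\<And>a b \<tau>. 0 \<le> a \<Longrightarrow> a \<le> b \<Longrightarrow> b \<le> 1 \<Longrightarrow> b - a \<le> \<delta>
       \<Longrightarrow> (\<And>s. a < s \<Longrightarrow> s \<le> 1 \<Longrightarrow> G a < G s) \<Longrightarrow> 0 \<le> \<tau> \<Longrightarrow> \<tau> \<le> 1
       \<Longrightarrow> G (a + \<tau> * (b - a)) - G a \<le> M * \<tau> * max (G b - G a) 0"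
    and "\<delta> > 0" "M \<ge> 1" "0 \<le> t" "t \<le> 1"
  shows "G t - G 0 \<le> M * (1 + 1 / \<delta>) * t * max (G 1 - G 0) 0"
proof (cases "G 0 < G 1")
  case True
  then have "max (G 1 - G 0) 0 = G 1 - G 0"
    by simp
  with growth_from_local_growth_if_increasing[OF assms True] show ?thesis
    by (simp only:)
next
  case False
  then have "max (G 1 - G 0) 0 = 0"
    by simp
  moreover have "G t \<le> G 0"
    using quasiconvex[of 0 t 1] assms(6,7) False by simp
  ultimately show ?thesis
    by simp
qed

lemma expc_in_Y: "v \<in> Ystar Y Dx x \<Longrightarrow> expc Y Dx x v \<in> Y"
  unfolding expc_def Ystar_def by (rule inv_into_into)

lemma minus_Dx_expc: "v \<in> Ystar Y Dx x \<Longrightarrow> - Dx x (expc Y Dx x v) = v"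
  unfolding expc_def Ystar_def by (rule f_inv_into_f)

lemma expc_minus_Dx:
  assumes "standing_assumptions X Y c Dx Dy Dxy Dyx" and "x \<in> X" and "y \<in> Y"
  shows "expc Y Dx x (- Dx x y) = y"
  using assms inv_into_f_f[of "\<lambda>y. - Dx x y" Y y]
  unfolding standing_assumptions_def expc_def by blast

lemma continuous_on_minus_Dx:
  assumes "standing_assumptions X Y c Dx Dy Dxy Dyx" and "x \<in> X"
  shows "continuous_on Y (\<lambda>y. - Dx x y)"
proof -
  have "\<forall>y\<in>Y. (Dx x has_derivative (*v) (Dxy x y)) (at y)"
    using assms unfolding standing_assumptions_def by blast
  then show ?thesis
    by (intro continuous_at_imp_continuous_on ballI continuous_minus has_derivative_continuous) auto
qed

lemma compact_Ystar:
  assumes "standing_assumptions X Y c Dx Dy Dxy Dyx" and "x \<in> X"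
  shows "compact (Ystar Y Dx x)"
proof -
  have "compact Y"
    using assms(1) by (simp add: standing_assumptions_def)
  then show ?thesis
    unfolding Ystar_def by (rule compact_continuous_image[OF continuous_on_minus_Dx[OF assms]])
qed

lemma convex_Ystar:
  assumes "standing_assumptions X Y c Dx Dy Dxy Dyx" and "x \<in> X"
  shows "convex (Ystar Y Dx x)"
  using assms unfolding standing_assumptions_def Ystar_def by blast

lemma continuous_on_expc:
  assumes "standing_assumptions X Y c Dx Dy Dxy Dyx" and "x \<in> X"
  shows "continuous_on (Ystar Y Dx x) (expc Y Dx x)"
proof -
  have "compact Y"
    using assms(1) by (simp add: standing_assumptions_def)
  then show ?thesis
    unfolding Ystar_def
    by (rule continuous_on_inv[OF continuous_on_minus_Dx[OF assms]]) (simp add: expc_minus_Dx[OF assms])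
qed

lemma expc_has_derivative:
  assumes SA: "standing_assumptions X Y c Dx Dy Dxy Dyx" and x: "x \<in> X"
    and v: "v \<in> Ystar Y Dx x"
  obtains A' where "Dxy x (expc Y Dx x v) ** A' = mat 1"
    and "(expc Y Dx x has_derivative (\<lambda>h. - (A' *v h))) (at v within Ystar Y Dx x)"
proof -
  define y where "y = expc Y Dx x v"
  have y: "y \<in> Y" "- Dx x y = v"
    using v by (auto simp: y_def expc_in_Y minus_Dx_expc)
  obtain A' where A': "Dxy x y ** A' = mat 1" "A' ** Dxy x y = mat 1"
    using SA x y unfolding standing_assumptions_def invertible_def by blast
  have "((\<lambda>y. - Dx x y) has_derivative (\<lambda>k. - (Dxy x y *v k))) (at y within Y)"
    using SA x y unfolding standing_assumptions_def
    by (blast intro: has_derivative_minus has_derivative_at_withinI)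
  moreover have "continuous (at (- Dx x y) within (\<lambda>y. - Dx x y) ` Y) (expc Y Dx x)"
    using continuous_on_expc[OF SA x] y
    by (auto simp: Ystar_def continuous_on_eq_continuous_within)
  moreover have "(\<lambda>h. - (A' *v h)) \<circ> (\<lambda>k. - (Dxy x y *v k)) = id"
    using A'(2) by (auto simp: vec.neg matrix_vector_mul_assoc)
  ultimately have "(expc Y Dx x has_derivative (\<lambda>h. - (A' *v h))) (at (- Dx x y) within (\<lambda>y. - Dx x y) ` Y)"
    using y(1) expc_minus_Dx[OF SA x]
    by (intro has_derivative_inverse_within) (auto intro: linear_compose_neg)
  with A'(1) y that show ?thesis
    by (simp add: y_def Ystar_def)
qed

lemma Ffun_has_derivative_gradF:
  assumes SA: "standing_assumptions X Y c Dx Dy Dxy Dyx" and x0: "x0 \<in> X" and x1: "x1 \<in> X"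
    and v: "v \<in> Ystar Y Dx x0"
  shows "(Ffun Y c Dx x0 x1 has_derivative (\<lambda>h. gradF Y c Dx x0 x1 v \<bullet> h)) (at v within Ystar Y Dx x0)"
proof -
  define y where "y = expc Y Dx x0 v"
  obtain A' where expc_deriv: "(expc Y Dx x0 has_derivative (\<lambda>h. - (A' *v h))) (at v within Ystar Y Dx x0)"
    using expc_has_derivative[OF SA x0 v] by blast
  have "y \<in> Y"
    using v by (simp add: y_def expc_in_Y)
  then have "(c x1 has_derivative (\<lambda>k. Dy x1 y \<bullet> k)) (at (expc Y Dx x0 v))"
    and "(c x0 has_derivative (\<lambda>k. Dy x0 y \<bullet> k)) (at (expc Y Dx x0 v))"
    using SA x0 x1 unfolding standing_assumptions_def y_def by blast+
  from has_derivative_add[OF has_derivative_minus[OF has_derivative_compose[OF expc_deriv this(1)]]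
      has_derivative_compose[OF expc_deriv this(2)]]
  have "(Ffun Y c Dx x0 x1 has_derivative (\<lambda>h. ((Dy x1 y - Dy x0 y) v* A') \<bullet> h)) (at v within Ystar Y Dx x0)"
    by (simp add: Ffun_def[abs_def] dot_lmul_matrix inner_diff_left)
  then show ?thesis
    unfolding gradF_def by (rule someI)
qed

lemma continuous_on_Ffun:
  assumes "standing_assumptions X Y c Dx Dy Dxy Dyx" and "x0 \<in> X" and "x1 \<in> X"
  shows "continuous_on (Ystar Y Dx x0) (Ffun Y c Dx x0 x1)"
  using Ffun_has_derivative_gradF[OF assms] has_derivative_continuous
  by (metis continuous_on_eq_continuous_within)

text \<open>Y need not be convex, so D_x c(x, .) is compared through the convex set Y*_{x_0}:
  the derivative of D_x c(x, exp^c_{x_0}(.)) at -D_x c(x_0, y) is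
  D^2_xy c(x, y) (D^2_xy c(x_0, y))^{-1}.\<close>

lemma Dx_expc_Lipschitz:
  assumes SA: "standing_assumptions X Y c Dx Dy Dxy Dyx" and x0: "x0 \<in> X" and x: "x \<in> X"
    and "m > 0" and "B \<ge> 0"
    and lower: "\<And>y u. y \<in> Y \<Longrightarrow> m * norm u \<le> norm (Dxy x0 y *v u)"
    and upper: "\<And>y u. y \<in> Y \<Longrightarrow> norm (Dxy x y *v u) \<le> B * norm u"
    and a: "a \<in> Ystar Y Dx x0" and b: "b \<in> Ystar Y Dx x0"
  shows "norm (Dx x (expc Y Dx x0 a) - Dx x (expc Y Dx x0 b)) \<le> B / m * norm (a - b)"
proof -
  have "\<exists>E. ((\<lambda>z. Dx x (expc Y Dx x0 z)) has_derivative E) (at z within Ystar Y Dx x0) \<and> onorm E \<le> B / m"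
    if z: "z \<in> Ystar Y Dx x0" for z
  proof -
    define y where "y = expc Y Dx x0 z"
    have "y \<in> Y"
      using z by (simp add: y_def expc_in_Y)
    obtain A' where A': "Dxy x0 y ** A' = mat 1"
      and expc_deriv: "(expc Y Dx x0 has_derivative (\<lambda>h. - (A' *v h))) (at z within Ystar Y Dx x0)"
      using expc_has_derivative[OF SA x0 z] unfolding y_def by blast
    have "(Dx x has_derivative (*v) (Dxy x y)) (at (expc Y Dx x0 z))"
      using SA x \<open>y \<in> Y\<close> unfolding standing_assumptions_def y_def by blast
    from has_derivative_compose[OF expc_deriv this]
    have "((\<lambda>z. Dx x (expc Y Dx x0 z)) has_derivative (\<lambda>h. Dxy x y *v - (A' *v h))) (at z within Ystar Y Dx x0)" .
    moreover have "norm (Dxy x y *v - (A' *v h)) \<le> B / m * norm h" for h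
      using norm_matrix_vector_mult_right_inverse_le[OF \<open>m > 0\<close> \<open>B \<ge> 0\<close> lower[OF \<open>y \<in> Y\<close>] A'
          upper[OF \<open>y \<in> Y\<close>]]
      by (simp add: vec.neg)
    then have "onorm (\<lambda>h. Dxy x y *v - (A' *v h)) \<le> B / m"
      by (rule onorm_le)
    ultimately show ?thesis
      by blast
  qed
  then obtain E where "\<And>z. z \<in> Ystar Y Dx x0 \<Longrightarrow>
      ((\<lambda>z. Dx x (expc Y Dx x0 z)) has_derivative E z) (at z within Ystar Y Dx x0) \<and> onorm (E z) \<le> B / m"
    by metis
  then show ?thesis
    using differentiable_bound[OF convex_Ystar[OF SA x0] _ _ a b] by blast
qed

lemma Ystar_diameters_uniformly_bounded:
  assumes SA: "standing_assumptions X Y c Dx Dy Dxy Dyx"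
  obtains D where "D \<ge> 0"
    and "\<And>x v w. x \<in> X \<Longrightarrow> v \<in> Ystar Y Dx x \<Longrightarrow> w \<in> Ystar Y Dx x \<Longrightarrow> norm (v - w) \<le> D"
proof (cases "X = {}")
  case True
  then show ?thesis
    using that[of 0] by blast
next
  case False
  then obtain x0 where x0: "x0 \<in> X"
    by blast
  have "compact (X \<times> Y)"
    using SA by (auto simp: standing_assumptions_def intro: compact_Times)
  moreover have "continuous_on (X \<times> Y) (\<lambda>(x, y). Dxy x y)"
    using SA unfolding standing_assumptions_def by (blast intro: lipschitz_on_continuous_on)
  moreover have "\<And>p. p \<in> X \<times> Y \<Longrightarrow> invertible ((\<lambda>(x, y). Dxy x y) p)"
    using SA unfolding standing_assumptions_def by auto
  ultimately obtain m B where "m > 0" "B \<ge> 0"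
    and lower: "\<And>x y u. x \<in> X \<Longrightarrow> y \<in> Y \<Longrightarrow> m * norm u \<le> norm (Dxy x y *v u)"
    and upper: "\<And>x y u. x \<in> X \<Longrightarrow> y \<in> Y \<Longrightarrow> norm (Dxy x y *v u) \<le> B * norm u"
    by (rule invertible_matrices_uniform_bounds) auto
  obtain R where "R > 0" and R: "\<And>z. z \<in> Ystar Y Dx x0 \<Longrightarrow> norm z \<le> R"
    using compact_imp_bounded[OF compact_Ystar[OF SA x0]] by (auto simp: bounded_pos)
  have "norm (v - w) \<le> B / m * (2 * R)"
    if x: "x \<in> X" and v: "v \<in> Ystar Y Dx x" and w: "w \<in> Ystar Y Dx x" for x v w
  proof -
    obtain y1 y2 where "y1 \<in> Y" "y2 \<in> Y" and vw: "v = - Dx x y1" "w = - Dx x y2"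
      using v w by (auto simp: Ystar_def)
    define a b where "a = - Dx x0 y1" and "b = - Dx x0 y2"
    have ab: "a \<in> Ystar Y Dx x0" "b \<in> Ystar Y Dx x0"
      using \<open>y1 \<in> Y\<close> \<open>y2 \<in> Y\<close> by (auto simp: a_def b_def Ystar_def)
    have "norm (v - w) = norm (Dx x (expc Y Dx x0 a) - Dx x (expc Y Dx x0 b))"
      using expc_minus_Dx[OF SA x0] \<open>y1 \<in> Y\<close> \<open>y2 \<in> Y\<close> vw
      by (simp add: a_def b_def norm_minus_commute)
    also have "\<dots> \<le> B / m * norm (a - b)"
      using Dx_expc_Lipschitz[OF SA x0 x \<open>m > 0\<close> \<open>B \<ge> 0\<close> _ _ ab] lower upper x0 x by blast
    also have "\<dots> \<le> B / m * (2 * R)"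
      using R[OF ab(1)] R[OF ab(2)] norm_triangle_ineq4[of a b] \<open>m > 0\<close> \<open>B \<ge> 0\<close>
      by (intro mult_left_mono) auto
    finally show ?thesis .
  qed
  moreover have "B / m * (2 * R) \<ge> 0"
    using \<open>m > 0\<close> \<open>B \<ge> 0\<close> \<open>R > 0\<close> by simp
  ultimately show ?thesis
    using that by blast
qed

lemma forward_point_in_Bplus:
  assumes SA: "standing_assumptions X Y c Dx Dy Dxy Dyx" and x0: "x0 \<in> X" and x1: "x1 \<in> X"
    and ray: "\<And>s. 0 \<le> s \<Longrightarrow> s \<le> 1 \<Longrightarrow> p + s *\<^sub>R u \<in> Ystar Y Dx x0"
    and increasing: "\<And>s. 0 < s \<Longrightarrow> s \<le> 1 \<Longrightarrow> Ffun Y c Dx x0 x1 p \<le> Ffun Y c Dx x0 x1 (p + s *\<^sub>R u)"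
    and "norm u < r"
  shows "p + u \<in> Bplus Y c Dx x0 x1 r p \<inter> Ystar Y Dx x0"
proof -
  have "p \<in> Ystar Y Dx x0" "p + u \<in> Ystar Y Dx x0"
    using ray[of 0] ray[of 1] by simp_all
  moreover have "0 \<le> u \<bullet> gradF Y c Dx x0 x1 p"
    using gradient_inner_nonneg_if_increasing_along_ray[OF
        Ffun_has_derivative_gradF[OF SA x0 x1 \<open>p \<in> Ystar Y Dx x0\<close>] ray increasing] .
  ultimately show ?thesis
    using \<open>norm u < r\<close> by (simp add: Bplus_def dist_norm)
qed

lemma loeper_quasiconvex_on_segment:
  assumes SA: "standing_assumptions X Y c Dx Dy Dxy Dyx" and "loeper X Y c Dx"
    and "x0 \<in> X" "x1 \<in> X" "v0 \<in> Ystar Y Dx x0" "v1 \<in> Ystar Y Dx x0"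
    and "0 \<le> a" "a \<le> s" "s \<le> b" "b \<le> 1"
  shows "Ffun Y c Dx x0 x1 ((1 - s) *\<^sub>R v0 + s *\<^sub>R v1)
    \<le> max (Ffun Y c Dx x0 x1 ((1 - a) *\<^sub>R v0 + a *\<^sub>R v1)) (Ffun Y c Dx x0 x1 ((1 - b) *\<^sub>R v0 + b *\<^sub>R v1))"
proof (cases "a = b")
  case False
  define \<mu> where "\<mu> = (s - a) / (b - a)"
  have "0 \<le> \<mu>" "\<mu> \<le> 1"
    using assms(8,9) False by (auto simp: \<mu>_def)
  moreover have "(1 - \<mu>) *\<^sub>R ((1 - a) *\<^sub>R v0 + a *\<^sub>R v1) + \<mu> *\<^sub>R ((1 - b) *\<^sub>R v0 + b *\<^sub>R v1)
      = (1 - s) *\<^sub>R v0 + s *\<^sub>R v1"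
    using False by (simp add: affine_combination_of_segment_points \<mu>_def)
  moreover have "(1 - a) *\<^sub>R v0 + a *\<^sub>R v1 \<in> Ystar Y Dx x0" "(1 - b) *\<^sub>R v0 + b *\<^sub>R v1 \<in> Ystar Y Dx x0"
    using assms(3-10) convexD[OF convex_Ystar[OF SA]] by auto
  ultimately show ?thesis
    using assms(2-4) unfolding loeper_def by (metis atLeastAtMost_iff)
qed (use assms in simp)

definition QQconv_local :: "'n::finite vec set \<Rightarrow> 'n vec set \<Rightarrow> ('n vec \<Rightarrow> 'n vec \<Rightarrow> real)
    \<Rightarrow> ('n vec \<Rightarrow> 'n vec \<Rightarrow> 'n vec) \<Rightarrow> real \<Rightarrow> real \<Rightarrow> bool"
  where "QQconv_local X Y c Dx r M \<longleftrightarrow>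
    (\<forall>x0\<in>X. \<forall>x1\<in>X. \<forall>v0\<in>Ystar Y Dx x0. \<forall>v1\<in>Bplus Y c Dx x0 x1 r v0 \<inter> Ystar Y Dx x0. \<forall>t\<in>{0..1::real}.
       Ffun Y c Dx x0 x1 ((1 - t) *\<^sub>R v0 + t *\<^sub>R v1) - Ffun Y c Dx x0 x1 v0
         \<le> M * t * max (Ffun Y c Dx x0 x1 v1 - Ffun Y c Dx x0 x1 v0) 0)"

lemma QQconv_local_step_on_segment:
  fixes Y c Dx x0 x1 v0 v1
  defines "G \<equiv> \<lambda>s. Ffun Y c Dx x0 x1 ((1 - s) *\<^sub>R v0 + s *\<^sub>R v1)"
  assumes SA: "standing_assumptions X Y c Dx Dy Dxy Dyx" and QQ_local: "QQconv_local X Y c Dx r M"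
    and x0: "x0 \<in> X" and x1: "x1 \<in> X" and v0: "v0 \<in> Ystar Y Dx x0" and v1: "v1 \<in> Ystar Y Dx x0"
    and ab: "0 \<le> a" "a \<le> b" "b \<le> 1" and short: "(b - a) * norm (v1 - v0) < r"
    and increasing: "\<And>s. a < s \<Longrightarrow> s \<le> 1 \<Longrightarrow> G a < G s"
    and \<tau>: "0 \<le> \<tau>" "\<tau> \<le> 1"
  shows "G (a + \<tau> * (b - a)) - G a \<le> M * \<tau> * max (G b - G a) 0"
proof -
  define seg where "seg s = (1 - s) *\<^sub>R v0 + s *\<^sub>R v1" for s
  have seg_in: "seg s \<in> Ystar Y Dx x0" if "0 \<le> s" "s \<le> 1" for s
    using convexD[OF convex_Ystar[OF SA x0] v0 v1, of "1 - s" s] that by (simp add: seg_def)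
  have seg_diff: "seg b - seg a = (b - a) *\<^sub>R (v1 - v0)"
    by (simp add: seg_def algebra_simps)
  have seg_step: "seg a + s *\<^sub>R (seg b - seg a) = seg (a + s * (b - a))" for s
    by (simp add: seg_diff) (simp add: seg_def algebra_simps)
  have ray_param: "a \<le> a + s * (b - a)" "a + s * (b - a) \<le> b" if "0 \<le> s" "s \<le> 1" for s
    using that \<open>a \<le> b\<close> mult_left_le_one_le[of "b - a" s] by auto
  have "seg a + (seg b - seg a) \<in> Bplus Y c Dx x0 x1 r (seg a) \<inter> Ystar Y Dx x0"
  proof (rule forward_point_in_Bplus[OF SA x0 x1])
    show "seg a + s *\<^sub>R (seg b - seg a) \<in> Ystar Y Dx x0" if "0 \<le> s" "s \<le> 1" for s
      unfolding seg_step using ray_param[OF that] \<open>0 \<le> a\<close> \<open>b \<le> 1\<close> by (intro seg_in) auto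
    show "Ffun Y c Dx x0 x1 (seg a) \<le> Ffun Y c Dx x0 x1 (seg a + s *\<^sub>R (seg b - seg a))"
      if "0 < s" "s \<le> 1" for s
    proof (cases "a = b")
      case False
      then have "a < a + s * (b - a)"
        using that \<open>a \<le> b\<close> by simp
      moreover have "a + s * (b - a) \<le> 1"
        using ray_param[of s] that \<open>b \<le> 1\<close> by linarith
      ultimately show ?thesis
        unfolding seg_step using increasing by (fastforce simp: G_def seg_def)
    qed simp
    show "norm (seg b - seg a) < r"
      using short \<open>a \<le> b\<close> by (simp add: seg_diff)
  qed
  then have "seg b \<in> Bplus Y c Dx x0 x1 r (seg a) \<inter> Ystar Y Dx x0"
    by simp
  then have "Ffun Y c Dx x0 x1 ((1 - \<tau>) *\<^sub>R seg a + \<tau> *\<^sub>R seg b) - Ffun Y c Dx x0 x1 (seg a)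
      \<le> M * \<tau> * max (Ffun Y c Dx x0 x1 (seg b) - Ffun Y c Dx x0 x1 (seg a)) 0"
    using QQ_local[unfolded QQconv_local_def, rule_format, OF x0 x1 seg_in[of a]] ab \<tau> by simp
  then show ?thesis
    by (simp add: G_def seg_def affine_combination_of_segment_points)
qed

lemma QQconv_local_segment_bound:
  assumes SA: "standing_assumptions X Y c Dx Dy Dxy Dyx" and loeper: "loeper X Y c Dx"
    and QQ_local: "QQconv_local X Y c Dx r M" and "r > 0" "M \<ge> 1" "D \<ge> 0"
    and x0: "x0 \<in> X" and x1: "x1 \<in> X" and v0: "v0 \<in> Ystar Y Dx x0" and v1: "v1 \<in> Ystar Y Dx x0"
    and "norm (v1 - v0) \<le> D" and t: "0 \<le> t" "t \<le> 1"
  shows "Ffun Y c Dx x0 x1 ((1 - t) *\<^sub>R v0 + t *\<^sub>R v1) - Ffun Y c Dx x0 x1 v0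
    \<le> M * (2 + 2 * D / r) * t * max (Ffun Y c Dx x0 x1 v1 - Ffun Y c Dx x0 x1 v0) 0"
proof -
  define seg where "seg s = (1 - s) *\<^sub>R v0 + s *\<^sub>R v1" for s
  define G where "G s = Ffun Y c Dx x0 x1 (seg s)" for s
  \<comment> \<open>A parameter step of length \<delta> moves less than r, and 1 + 1/\<delta> = 2 + 2D/r.\<close>
  define \<delta> where "\<delta> = r / (r + 2 * D)"
  have "\<delta> > 0"
    using \<open>r > 0\<close> \<open>D \<ge> 0\<close> by (simp add: \<delta>_def)
  have "\<delta> * norm (v1 - v0) < r"
  proof -
    have "\<delta> * norm (v1 - v0) \<le> \<delta> * D"
      using \<open>\<delta> > 0\<close> \<open>norm (v1 - v0) \<le> D\<close> by simp
    also have "\<dots> < r"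
      using \<open>r > 0\<close> \<open>D \<ge> 0\<close> by (simp add: \<delta>_def field_simps add_nonneg_pos)
    finally show ?thesis .
  qed
  have "continuous_on {0..1} G"
  proof -
    have "continuous_on {0..1} seg"
      unfolding seg_def by (intro continuous_intros)
    moreover have "seg ` {0..1} \<subseteq> Ystar Y Dx x0"
      using convexD[OF convex_Ystar[OF SA x0] v0 v1] by (auto simp: seg_def)
    ultimately show ?thesis
      unfolding G_def by (rule continuous_on_compose2[OF continuous_on_Ffun[OF SA x0 x1]])
  qed
  moreover have "G s \<le> max (G a) (G b)" if "0 \<le> a" "a \<le> s" "s \<le> b" "b \<le> 1" for a s b
    using loeper_quasiconvex_on_segment[OF SA loeper x0 x1 v0 v1 that] by (simp add: G_def seg_def)
  moreover have "G (a + \<tau> * (b - a)) - G a \<le> M * \<tau> * max (G b - G a) 0"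
    if "0 \<le> a" "a \<le> b" "b \<le> 1" "b - a \<le> \<delta>" "\<And>s. a < s \<Longrightarrow> s \<le> 1 \<Longrightarrow> G a < G s"
      and "0 \<le> \<tau>" "\<tau> \<le> 1" for a b \<tau>
  proof -
    have "(b - a) * norm (v1 - v0) < r"
      using mult_right_mono[OF \<open>b - a \<le> \<delta>\<close> norm_ge_zero[of "v1 - v0"]] \<open>\<delta> * norm (v1 - v0) < r\<close> by linarith
    with that show ?thesis
      using QQconv_local_step_on_segment[OF SA QQ_local x0 x1 v0 v1] by (simp add: G_def seg_def)
  qed
  ultimately have "G t - G 0 \<le> M * (1 + 1 / \<delta>) * t * max (G 1 - G 0) 0"
    using \<open>\<delta> > 0\<close> \<open>M \<ge> 1\<close> t by (rule quasiconvex_growth_from_local_growth)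
  moreover have "1 + 1 / \<delta> = 2 + 2 * D / r"
    using \<open>r > 0\<close> \<open>D \<ge> 0\<close> by (simp add: \<delta>_def field_simps)
  ultimately show ?thesis
    by (simp add: G_def seg_def)
qed

theorem lemma3p8:
  fixes X Y :: "(real ^ 'n::finite) set"
    and c :: "real ^ 'n \<Rightarrow> real ^ 'n \<Rightarrow> real"
    and Dx Dy :: "real ^ 'n \<Rightarrow> real ^ 'n \<Rightarrow> real ^ 'n"
    and Dxy Dyx :: "real ^ 'n \<Rightarrow> real ^ 'n \<Rightarrow> real ^ 'n ^ 'n"
  assumes "standing_assumptions X Y c Dx Dy Dxy Dyx"
    and "loeper X Y c Dx"
    and "\<exists>r>0. \<exists>M\<ge>1. \<forall>x0\<in>X. \<forall>x1\<in>X. \<forall>v0\<in>Ystar Y Dx x0.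
           \<forall>v1\<in>Bplus Y c Dx x0 x1 r v0 \<inter> Ystar Y Dx x0. \<forall>t\<in>{0..1::real}.
             Ffun Y c Dx x0 x1 ((1 - t) *\<^sub>R v0 + t *\<^sub>R v1) - Ffun Y c Dx x0 x1 v0
               \<le> M * t * max (Ffun Y c Dx x0 x1 v1 - Ffun Y c Dx x0 x1 v0) 0"
  shows "QQconv X Y c Dx"
proof -
  obtain r M where "r > 0" "M \<ge> 1" and QQ_local: "QQconv_local X Y c Dx r M"
    using assms(3) unfolding QQconv_local_def by blast
  obtain D where "D \<ge> 0"
    and diam: "\<And>x v w. x \<in> X \<Longrightarrow> v \<in> Ystar Y Dx x \<Longrightarrow> w \<in> Ystar Y Dx x \<Longrightarrow> norm (v - w) \<le> D"
    using Ystar_diameters_uniformly_bounded[OF assms(1)] by blast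
  have "1 \<le> 2 + 2 * D / r"
    using \<open>r > 0\<close> \<open>D \<ge> 0\<close> by simp
  then have "1 \<le> M * (2 + 2 * D / r)"
    using mult_mono[OF \<open>M \<ge> 1\<close>] \<open>M \<ge> 1\<close> by fastforce
  then show ?thesis
    unfolding QQconv_def
  proof (intro exI[of _ "M * (2 + 2 * D / r)"] conjI ballI)
    fix x0 x1 v0 v1 t
    assume "x0 \<in> X" "x1 \<in> X" "v0 \<in> Ystar Y Dx x0" "v1 \<in> Ystar Y Dx x0" "t \<in> {0..1::real}"
    then show "Ffun Y c Dx x0 x1 ((1 - t) *\<^sub>R v0 + t *\<^sub>R v1) - Ffun Y c Dx x0 x1 v0
        \<le> M * (2 + 2 * D / r) * t * max (Ffun Y c Dx x0 x1 v1 - Ffun Y c Dx x0 x1 v0) 0"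
      using QQconv_local_segment_bound[OF assms(1,2) QQ_local \<open>r > 0\<close> \<open>M \<ge> 1\<close> \<open>D \<ge> 0\<close>] diam
      by simp
  qed
qed

end
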